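(* Let $N\ge2$, $M\ge1$, $k\ge0$. There exist constants $C_0,\dots,C_k>0$, depending only on $N,M,k$, such that for every unit vector $\psi\in\mathcal H_M$, $$\mathcal W_k(|\psi\rangle\langle\psi|)=\sum_{\ell=0}^k C_\ell\,\mathcal T^\ell\big(\gamma^{(k-\ell)}_\psi\big),$$ where here $\mathcal T^\ell$ acts on operators on $\mathcal H_{k-\ell}$ (i.e. $\mathcal T^\ell(\Gamma)=\frac{k!}{(k-\ell)!}P_{k}(I_{\mathbb C^N}^{\otimes \ell}\otimes\Gamma)P_{k}$ for $\Gamma$ on $\mathcal H_{k-\ell}$).
   Context: $\mathcal H_n=P_n(\mathbb C^N)^{\otimes n}$ is the totally symmetric subspace, $P_n$ the symmetrizing projection. On the bosonic Fock space $\bigoplus_n\mathcal H_n$, $a^*(v)\phi=\sqrt{n+1}P_{n+1}(v\otimes\phi)$ for $\phi\in\mathcal H_n$, $a(v)=a^*(v)^*$, $a_i=a(e_i)$ for an orthonormal basis $(e_i)$ of $\mathbb C^N$. $\mathcal W_k(\Gamma)=\frac1{k!}\sum_{i_1,\dots,i_k}\sum_{j_1,\dots,j_k}\mathrm{Tr}_{\mathcal H_M}(\Gamma\,a_{i_1}\cdots a_{i_k}a^*_{j_k}\cdots a^*_{j_1})\,a^*_{i_1}\cdots a^*_{i_k}a_{j_k}\cdots a_{j_1}$ restricted to $\mathcal H_k$. For a unit vector $\psi\in\mathcal H_M$ and $0\le j\le M$, the $j$-particle reduced density matrix is the operator on $\mathcal H_j$ given by $\gamma^{(j)}_\psi=\frac{M!}{(M-j)!}\mathrm{Tr}_{M-j}|\psi\rangle\langle\psi|$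 (partial trace over the last $M-j$ tensor factors), so $\mathrm{Tr}\,\gamma^{(j)}_\psi=\frac{M!}{(M-j)!}$ and $\gamma^{(0)}_\psi=1$; for $j>M$, $\gamma^{(j)}_\psi=0$. *)

theory Defs
  imports Complex_Main "HOL-Combinatorics.Permutations"
begin

text \<open>A basis of (C^N)^{tensor n} is indexed by lists of length n with
entries in {0..<N}. A vector of the (full tensor) Fock space is a function nat list => complex;
its component in (C^N)^{tensor n} is its restriction to idx N n. Operators are linear maps
on such functions.\<close>

definition idx :: "nat \<Rightarrow> nat \<Rightarrow> nat list set" where
  "idx N n = {xs. length xs = n \<and> set xs \<subseteq> {..<N}}"

text \<open>Symmetrizing projection P_n, acting on the degree-(length xs) component.\<close>
definition symP :: "(nat list \<Rightarrow> complex) \<Rightarrow> nat list \<Rightarrow> complex" where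
  "symP f xs = (\<Sum>\<sigma>\<in>{\<sigma>. \<sigma> permutes {..<length xs}}.
                  f (map (\<lambda>i. xs ! \<sigma> i) [0..<length xs])) / of_nat (fact (length xs))"

text \<open>phi is a vector of H_n = P_n (C^N)^{tensor n}.\<close>
definition inH :: "nat \<Rightarrow> nat \<Rightarrow> (nat list \<Rightarrow> complex) \<Rightarrow> bool" where
  "inH N n \<phi> \<longleftrightarrow> (\<forall>xs\<in>idx N n. symP \<phi> xs = \<phi> xs) \<and> (\<forall>xs. xs \<notin> idx N n \<longrightarrow> \<phi> xs = 0)"

definition inner :: "nat \<Rightarrow> nat \<Rightarrow> (nat list \<Rightarrow> complex) \<Rightarrow> (nat list \<Rightarrow> complex) \<Rightarrow> complex" where
  "inner N n f g = (\<Sum>xs\<in>idx N n. cnj (f xs) * g xs)"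

definition unitH :: "nat \<Rightarrow> nat \<Rightarrow> (nat list \<Rightarrow> complex) \<Rightarrow> bool" where
  "unitH N n \<psi> \<longleftrightarrow> inH N n \<psi> \<and> (\<Sum>xs\<in>idx N n. (cmod (\<psi> xs))\<^sup>2) = 1"

text \<open>Creation operator a^*(e_i): a^* phi = sqrt(n+1) P_{n+1}(e_i tensor phi).\<close>
definition adag :: "nat \<Rightarrow> (nat list \<Rightarrow> complex) \<Rightarrow> nat list \<Rightarrow> complex" where
  "adag i f xs = (if xs = [] then 0 else
      complex_of_real (sqrt (real (length xs))) *
      symP (\<lambda>ys. if ys \<noteq> [] \<and> hd ys = i then f (tl ys) else 0) xs)"

text \<open>Annihilation operator a(e_i), the adjoint of adag i on the bosonic Fock space:
(a_i phi)(xs) = sqrt(n+1) phi(i # xs) for phi in H_{n+1}.\<close>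
definition ann :: "nat \<Rightarrow> (nat list \<Rightarrow> complex) \<Rightarrow> nat list \<Rightarrow> complex" where
  "ann i f xs = complex_of_real (sqrt (real (length xs + 1))) * f (i # xs)"

definition compose :: "(('a \<Rightarrow> 'a)) list \<Rightarrow> 'a \<Rightarrow> 'a" where
  "compose ops = foldr (\<circ>) ops id"

definition delta :: "nat list \<Rightarrow> nat list \<Rightarrow> complex" where
  "delta xs = (\<lambda>ys. if ys = xs then 1 else 0)"

text \<open>Trace over H_M of an operator T preserving H_M: Tr_{(C^N)^{tensor M}}(T P_M).\<close>
definition trH :: "nat \<Rightarrow> nat \<Rightarrow> ((nat list \<Rightarrow> complex) \<Rightarrow> nat list \<Rightarrow> complex) \<Rightarrow> complex" where
  "trH N M T = (\<Sum>xs\<in>idx N M. T (symP (delta xs)) xs)"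

definition proj :: "nat \<Rightarrow> nat \<Rightarrow> (nat list \<Rightarrow> complex) \<Rightarrow> (nat list \<Rightarrow> complex) \<Rightarrow> nat list \<Rightarrow> complex" where
  "proj N M \<psi> g = (\<lambda>xs. inner N M \<psi> g * \<psi> xs)"

text \<open>W_k(Gamma) (to be evaluated on H_k): 
 1/k! sum_{is,js} Tr_{H_M}(Gamma a_{i1}..a_{ik} a*_{jk}..a*_{j1}) a*_{i1}..a*_{ik} a_{jk}..a_{j1}.\<close>
definition W :: "nat \<Rightarrow> nat \<Rightarrow> nat \<Rightarrow> ((nat list \<Rightarrow> complex) \<Rightarrow> nat list \<Rightarrow> complex)
                   \<Rightarrow> (nat list \<Rightarrow> complex) \<Rightarrow> nat list \<Rightarrow> complex" where
  "W N M k \<Gamma> \<phi> = (\<lambda>xs. (\<Sum>is\<in>idx N k. \<Sum>js\<in>idx N k.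
      trH N M (\<Gamma> \<circ> compose (map ann is @ map adag (rev js))) *
      compose (map adag is @ map ann (rev js)) \<phi> xs) / of_nat (fact k))"

text \<open>Reduced density matrix gamma^{(j)}_psi = M!/(M-j)! Tr_{M-j} |psi><psi| (0 for j > M),
as an operator on (C^N)^{tensor j}.\<close>
definition rdm :: "nat \<Rightarrow> nat \<Rightarrow> (nat list \<Rightarrow> complex) \<Rightarrow> nat \<Rightarrow> (nat list \<Rightarrow> complex) \<Rightarrow> nat list \<Rightarrow> complex" where
  "rdm N M \<psi> j g = (\<lambda>xs. if j \<le> M then
      of_nat (fact M) / of_nat (fact (M - j)) *
      (\<Sum>ys\<in>idx N j. (\<Sum>zs\<in>idx N (M - j). \<psi> (xs @ zs) * cnj (\<psi> (ys @ zs))) * g ys)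
    else 0)"

text \<open>I^{tensor l} tensor T, acting on (C^N)^{tensor (l + m)}.\<close>
definition tensorI :: "nat \<Rightarrow> ((nat list \<Rightarrow> complex) \<Rightarrow> nat list \<Rightarrow> complex)
                        \<Rightarrow> (nat list \<Rightarrow> complex) \<Rightarrow> nat list \<Rightarrow> complex" where
  "tensorI l T g = (\<lambda>xs. T (\<lambda>ys. g (take l xs @ ys)) (drop l xs))"

definition Tpow :: "nat \<Rightarrow> nat \<Rightarrow> ((nat list \<Rightarrow> complex) \<Rightarrow> nat list \<Rightarrow> complex)
                      \<Rightarrow> (nat list \<Rightarrow> complex) \<Rightarrow> nat list \<Rightarrow> complex" where
  "Tpow k l \<Gamma> \<phi> = (\<lambda>xs. of_nat (fact k) / of_nat (fact (k - l)) *
      symP (tensorI l \<Gamma> (symP \<phi>)) xs)"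

end

theory Submission
  imports Defs
begin

text \<open>Evaluating the ladder operators on basis vectors shows that the trace coefficients of
  \<open>W\<^sub>k\<close> are, up to \<open>(M + k)!/M!\<close>, overlaps of \<open>\<psi>\<close> with symmetrisations of \<open>\<psi>\<close> preceded by the
  indices \<open>J\<close>; summing over \<open>I\<close> and \<open>J\<close> turns \<open>W\<^sub>k(|\<psi>\<rangle>\<langle>\<psi>|) \<phi>\<close> at \<open>x\<close> into
  \<open>(M + k)!/M!\<close> times the sum over \<open>z\<close> of \<open>cnj (\<psi> z)\<close> times the symmetrisation of
  \<open>\<phi> \<otimes> \<psi>\<close> at \<open>x @ z\<close>. That symmetrisation averages over the \<open>k\<close>-sets of positions of
  \<open>x @ z\<close> that feed \<open>\<phi>\<close>. Grouping them by the number \<open>l\<close> of positions taken from \<open>x\<close>, and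
  using the symmetry of \<open>\<psi>\<close> to forget which positions are taken from \<open>z\<close>, the group of size
  \<open>l\<close> is a multiple of the same average computed for \<open>\<T>\<^sup>l(\<gamma>\<^sup>(\<^sup>k\<^sup>-\<^sup>l\<^sup>)\<^sub>\<psi>) \<phi>\<close> at \<open>x\<close>.
  Comparing factorials gives \<open>C\<^sub>l = k choose l\<close>.\<close>

section \<open>Symmetrization\<close>

definition mset_invariant :: "('a list \<Rightarrow> 'b) \<Rightarrow> bool" where
  "mset_invariant f \<longleftrightarrow> (\<forall>xs ys. mset xs = mset ys \<longrightarrow> f xs = f ys)"

lemma mset_invariantD: "mset_invariant f \<Longrightarrow> mset xs = mset ys \<Longrightarrow> f xs = f ys"
  unfolding mset_invariant_def by blast

lemma mset_invariant_append_left: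
  "mset_invariant f \<Longrightarrow> mset xs = mset ys \<Longrightarrow> f (as @ xs) = f (as @ ys)"
  by (rule mset_invariantD) simp_all

lemma mset_invariant_append_right:
  "mset_invariant f \<Longrightarrow> mset xs = mset ys \<Longrightarrow> f (xs @ as) = f (ys @ as)"
  by (rule mset_invariantD) simp_all

lemma finite_permutes_lessThan: "finite {\<sigma>. \<sigma> permutes {..<n::nat}}"
  by (rule finite_permutations) simp

lemma card_permutes_lessThan: "card {\<sigma>. \<sigma> permutes {..<n::nat}} = fact n"
  by (rule card_permutations) auto

lemma symP_eq_sum_permute_list:
  "symP f xs = (\<Sum>\<sigma>\<in>{\<sigma>. \<sigma> permutes {..<length xs}}. f (permute_list \<sigma> xs)) / of_nat (fact (length xs))"
  unfolding symP_def permute_list_def by simp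

lemma symP_permute_list:
  assumes "p permutes {..<length ys}"
  shows "symP f (permute_list p ys) = symP f ys"
proof -
  have "(\<Sum>\<sigma>\<in>{\<sigma>. \<sigma> permutes {..<length ys}}. f (permute_list \<sigma> (permute_list p ys)))
      = (\<Sum>\<sigma>\<in>{\<sigma>. \<sigma> permutes {..<length ys}}. f (permute_list (p \<circ> \<sigma>) ys))"
    by (intro sum.cong refl) (simp add: permute_list_compose)
  also have "\<dots> = (\<Sum>\<sigma>\<in>{\<sigma>. \<sigma> permutes {..<length ys}}. f (permute_list \<sigma> ys))"
    using setum_permutations_compose_left[OF assms, of "\<lambda>\<sigma>. f (permute_list \<sigma> ys)"] by simp
  finally show ?thesis by (simp add: symP_eq_sum_permute_list)
qed

lemma symP_mset_eq:
  assumes "mset xs = mset ys"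
  shows "symP f xs = symP f ys"
proof -
  obtain p where "p permutes {..<length ys}" "permute_list p ys = xs"
    using mset_eq_permutation[OF assms] by metis
  thus ?thesis using symP_permute_list by metis
qed

lemma symP_cong:
  assumes "\<And>ys. mset ys = mset xs \<Longrightarrow> f ys = g ys"
  shows "symP f xs = symP g xs"
  unfolding symP_eq_sum_permute_list
  by (intro arg_cong2[where f="(/)"] sum.cong refl assms) simp

lemma symP_mset_invariant:
  assumes "mset_invariant f"
  shows "symP f xs = f xs"
proof -
  have "symP f xs = symP (\<lambda>_. f xs) xs"
    by (rule symP_cong) (use assms in \<open>auto dest: mset_invariantD\<close>)
  thus ?thesis by (simp add: symP_eq_sum_permute_list card_permutes_lessThan)
qed

lemma symP_cmult: "symP (\<lambda>ys. c * f ys) xs = c * symP f xs"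
  unfolding symP_eq_sum_permute_list by (simp add: sum_distrib_left)

lemma symP_sum:
  assumes "finite S"
  shows "symP (\<lambda>ys. \<Sum>x\<in>S. c x * f x ys) xs = (\<Sum>x\<in>S. c x * symP (f x) xs)"
proof -
  have "(\<Sum>\<sigma>\<in>{\<sigma>. \<sigma> permutes {..<length xs}}. \<Sum>x\<in>S. c x * f x (permute_list \<sigma> xs))
      = (\<Sum>x\<in>S. c x * (\<Sum>\<sigma>\<in>{\<sigma>. \<sigma> permutes {..<length xs}}. f x (permute_list \<sigma> xs)))"
    by (subst sum.swap) (simp add: sum_distrib_left)
  thus ?thesis
    unfolding symP_eq_sum_permute_list by (simp add: sum_distrib_left sum_divide_distrib)
qed

lemma finite_idx [simp]: "finite (idx N n)"
proof -
  have "idx N n = {xs. set xs \<subseteq> {..<N} \<and> length xs = n}" unfolding idx_def by auto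
  thus ?thesis using finite_lists_length_eq[of "{..<N}" n] by simp
qed

lemma length_idx: "xs \<in> idx N n \<Longrightarrow> length xs = n"
  unfolding idx_def by simp

lemma idx_mset_eq:
  assumes "mset xs = mset ys"
  shows "xs \<in> idx N n \<longleftrightarrow> ys \<in> idx N n"
  using mset_eq_length[OF assms] mset_eq_setD[OF assms] unfolding idx_def by simp

lemma inH_mset_invariant:
  assumes "inH N n \<phi>"
  shows "mset_invariant \<phi>"
  unfolding mset_invariant_def
proof (intro allI impI)
  fix xs ys :: "nat list" assume m: "mset xs = mset ys"
  show "\<phi> xs = \<phi> ys"
  proof (cases "xs \<in> idx N n")
    case True
    with assms idx_mset_eq[OF m] have "\<phi> xs = symP \<phi> xs" "\<phi> ys = symP \<phi> ys"
      unfolding inH_def by auto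
    thus ?thesis using symP_mset_eq[OF m, of \<phi>] by simp
  next
    case False
    hence "ys \<notin> idx N n" using idx_mset_eq[OF m] by simp
    thus ?thesis using False assms unfolding inH_def by simp
  qed
qed

section \<open>Ladder operators\<close>

definition sum_linear :: "(('a \<Rightarrow> complex) \<Rightarrow> 'a \<Rightarrow> complex) \<Rightarrow> bool" where
  "sum_linear X \<longleftrightarrow> (\<forall>(S::'a set) c f. finite S \<longrightarrow>
      X (\<lambda>w. \<Sum>x\<in>S. c x * f x w) = (\<lambda>w. \<Sum>x\<in>S. c x * X (f x) w))"

lemma sum_linearD:
  fixes X :: "('a \<Rightarrow> complex) \<Rightarrow> 'a \<Rightarrow> complex" and S :: "'a set"
  assumes "sum_linear X" and "finite S"
  shows "X (\<lambda>w. \<Sum>x\<in>S. c x * f x w) = (\<lambda>w. \<Sum>x\<in>S. c x * X (f x) w)"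
  using assms(1)[unfolded sum_linear_def, rule_format, OF assms(2)] .

lemma sum_linear_ann: "sum_linear (ann i)"
  unfolding sum_linear_def ann_def by (auto simp: sum_distrib_left mult.left_commute)

lemma sum_linear_adag: "sum_linear (adag i)"
  unfolding sum_linear_def
proof (intro allI impI ext)
  fix S :: "nat list set" and c :: "nat list \<Rightarrow> complex"
    and f :: "nat list \<Rightarrow> nat list \<Rightarrow> complex" and w :: "nat list"
  assume "finite S"
  have "(\<lambda>ys. if ys \<noteq> [] \<and> hd ys = i then \<Sum>x\<in>S. c x * f x (tl ys) else 0)
      = (\<lambda>ys. \<Sum>x\<in>S. c x * (if ys \<noteq> [] \<and> hd ys = i then f x (tl ys) else 0))"
    by auto
  thus "adag i (\<lambda>w. \<Sum>x\<in>S. c x * f x w) w = (\<Sum>x\<in>S. c x * adag i (f x) w)"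
    unfolding adag_def using symP_sum[OF \<open>finite S\<close>]
    by (simp add: sum_distrib_left mult.left_commute)
qed

lemma compose_Nil [simp]: "compose [] = id"
  by (simp add: compose_def)

lemma compose_Cons [simp]: "compose (x # xs) = x \<circ> compose xs"
  by (simp add: compose_def)

lemma compose_append: "compose (xs @ ys) = compose xs \<circ> compose ys"
  by (induction xs) auto

lemma sum_linear_compose: "(\<And>X. X \<in> set ops \<Longrightarrow> sum_linear X) \<Longrightarrow> sum_linear (compose ops)"
proof (induction ops)
  case Nil
  thus ?case by (simp add: sum_linear_def)
next
  case (Cons X ops)
  hence X: "sum_linear X" and ops: "sum_linear (compose ops)" by auto
  show ?case
    unfolding sum_linear_def
    by (simp add: sum_linearD[OF ops] sum_linearD[OF X])
qed

lemma sum_linear_ladder: "sum_linear (compose (map ann I @ map adag J))"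
  by (rule sum_linear_compose) (auto simp: sum_linear_ann sum_linear_adag)

text \<open>The product of the normalising factors \<open>sqrt (p + 1), \<dots>, sqrt (p + q)\<close> picked up by
  \<open>q\<close> ladder operators moving between degrees \<open>p\<close> and \<open>p + q\<close>.\<close>
definition ladder_coeff :: "nat \<Rightarrow> nat \<Rightarrow> real" where
  "ladder_coeff p q = sqrt (fact (p + q) / fact p)"

lemma ladder_coeff_0 [simp]: "ladder_coeff p 0 = 1"
  by (simp add: ladder_coeff_def)

lemma ladder_coeff_squared: "ladder_coeff p q * ladder_coeff p q = fact (p + q) / fact p"
  unfolding ladder_coeff_def by simp

lemma ladder_coeff_Suc_bottom:
  "sqrt (real (Suc p)) * ladder_coeff (Suc p) q = ladder_coeff p (Suc q)"
proof -
  have "real (Suc p) * (fact (Suc p + q) / fact (Suc p)) = (fact (p + Suc q) / fact p :: real)"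
    by (simp add: field_simps del: of_nat_Suc)
  thus ?thesis unfolding ladder_coeff_def by (metis real_sqrt_mult)
qed

lemma ladder_coeff_Suc_top:
  "sqrt (real (p + Suc q)) * ladder_coeff p q = ladder_coeff p (Suc q)"
proof -
  have "fact (p + Suc q) = real (p + Suc q) * (fact (p + q) :: real)"
    by (metis add_Suc_right fact_Suc of_nat_fact of_nat_mult)
  thus ?thesis unfolding ladder_coeff_def by (metis real_sqrt_mult times_divide_eq_right)
qed

lemma compose_ann:
  "compose (map ann is) g zs = complex_of_real (ladder_coeff (length zs) (length is)) * g (rev is @ zs)"
proof (induction "is" arbitrary: zs)
  case Nil
  thus ?case by simp
next
  case (Cons i "is")
  have "compose (map ann (i # is)) g zs = ann i (compose (map ann is) g) zs"
    by simp
  also have "\<dots> = complex_of_real (sqrt (real (Suc (length zs))) * ladder_coeff (Suc (length zs)) (length is))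
      * g (rev (i # is) @ zs)"
    unfolding ann_def Cons by simp
  finally show ?case
    by (simp only: ladder_coeff_Suc_bottom length_Cons)
qed

definition cons_perm :: "(nat \<Rightarrow> nat) \<Rightarrow> nat \<Rightarrow> nat" where
  "cons_perm \<tau> i = (if i = 0 then 0 else Suc (\<tau> (i - 1)))"

lemma cons_perm_permutes:
  assumes "\<tau> permutes {..<n}"
  shows "cons_perm \<tau> permutes {..<Suc n}"
proof (rule bij_imp_permutes)
  have "bij_betw (cons_perm \<tau>) ({0} \<union> Suc ` {..<n}) ({0} \<union> Suc ` {..<n})"
  proof (rule bij_betw_combine)
    have "bij_betw (Suc \<circ> \<tau> \<circ> (\<lambda>i. i - 1)) (Suc ` {..<n}) (Suc ` {..<n})"
      by (intro bij_betw_trans[where B="{..<n}"] permutes_imp_bij[OF assms])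
        (auto simp: bij_betw_def inj_on_def image_iff)
    thus "bij_betw (cons_perm \<tau>) (Suc ` {..<n}) (Suc ` {..<n})"
      by (rule bij_betw_cong[THEN iffD1, rotated]) (auto simp: cons_perm_def)
  qed (auto simp: cons_perm_def bij_betw_def)
  moreover have "{0} \<union> Suc ` {..<n} = {..<Suc n}"
    using lessThan_Suc_eq_insert_0 by auto
  ultimately show "bij_betw (cons_perm \<tau>) {..<Suc n} {..<Suc n}" by simp
next
  fix x assume "x \<notin> {..<Suc n}"
  thus "cons_perm \<tau> x = x" using permutes_not_in[OF assms, of "x - 1"] by (auto simp: cons_perm_def)
qed

lemma permute_list_cons_perm:
  assumes "\<tau> permutes {..<length ys}"
  shows "permute_list (cons_perm \<tau>) (y # ys) = y # permute_list \<tau> ys"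
proof -
  have "[0..<Suc (length ys)] = 0 # map Suc [0..<length ys]"
    by (simp add: map_Suc_upt upt_conv_Cons del: upt_Suc)
  thus ?thesis unfolding permute_list_def by (simp add: cons_perm_def)
qed

text \<open>Symmetrizing the tail first does not change the full symmetrization: averaging over the
  permutations \<open>cons_perm \<tau>\<close> fixing the head is absorbed by the average over all permutations.\<close>
lemma symP_hd_symP:
  "symP (\<lambda>ys. if ys \<noteq> [] \<and> hd ys = i then symP h (tl ys) else 0) xs
   = symP (\<lambda>ys. if ys \<noteq> [] \<and> hd ys = i then h (tl ys) else 0) xs"
proof (cases xs)
  case Nil
  thus ?thesis by (simp add: symP_eq_sum_permute_list)
next
  case (Cons x xs')
  define n where "n = length xs'"
  define F where "F = (\<lambda>ys. if ys \<noteq> [] \<and> hd ys = i then h (tl ys) else 0)"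
  let ?P = "\<lambda>m. {\<sigma>. \<sigma> permutes {..<m::nat}}"
  have len: "length xs = Suc n" using Cons n_def by simp
  have head: "(if ws \<noteq> [] \<and> hd ws = i then symP h (tl ws) else 0)
       = (\<Sum>\<tau>\<in>?P n. F (permute_list (cons_perm \<tau>) ws)) / of_nat (fact n)"
    if len_ws: "length ws = Suc n" for ws
  proof -
    obtain w ws' where ws: "ws = w # ws'"
      using len_ws by (cases ws) auto
    have lws': "length ws' = n" using len_ws ws by simp
    have "(\<Sum>\<tau>\<in>?P n. F (permute_list (cons_perm \<tau>) ws))
        = (\<Sum>\<tau>\<in>?P n. if w = i then h (permute_list \<tau> ws') else 0)"
      by (intro sum.cong refl) (simp add: ws permute_list_cons_perm lws' F_def)
    thus ?thesis using lws' by (simp add: ws symP_eq_sum_permute_list)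
  qed
  have absorb: "(\<Sum>\<sigma>\<in>?P (Suc n). F (permute_list (cons_perm \<tau>) (permute_list \<sigma> xs)))
      = (\<Sum>\<sigma>\<in>?P (Suc n). F (permute_list \<sigma> xs))" if "\<tau> \<in> ?P n" for \<tau>
  proof -
    have c: "cons_perm \<tau> permutes {..<Suc n}" using cons_perm_permutes that by simp
    have "(\<Sum>\<sigma>\<in>?P (Suc n). F (permute_list (cons_perm \<tau>) (permute_list \<sigma> xs)))
        = (\<Sum>\<sigma>\<in>?P (Suc n). F (permute_list (\<sigma> \<circ> cons_perm \<tau>) xs))"
      by (intro sum.cong refl) (use c len in \<open>simp add: permute_list_compose\<close>)
    also have "\<dots> = (\<Sum>\<sigma>\<in>?P (Suc n). F (permute_list \<sigma> xs))"
      by (rule sum_permutations_compose_right[OF c, symmetric])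
    finally show ?thesis .
  qed
  have "(\<Sum>\<sigma>\<in>?P (Suc n). if permute_list \<sigma> xs \<noteq> [] \<and> hd (permute_list \<sigma> xs) = i
          then symP h (tl (permute_list \<sigma> xs)) else 0)
      = (\<Sum>\<sigma>\<in>?P (Suc n). \<Sum>\<tau>\<in>?P n. F (permute_list (cons_perm \<tau>) (permute_list \<sigma> xs))) / of_nat (fact n)"
    by (simp add: head len sum_divide_distrib)
  also have "\<dots> = (\<Sum>\<tau>\<in>?P n. \<Sum>\<sigma>\<in>?P (Suc n). F (permute_list \<sigma> xs)) / of_nat (fact n)"
    by (subst sum.swap) (simp add: absorb)
  also have "\<dots> = (\<Sum>\<sigma>\<in>?P (Suc n). F (permute_list \<sigma> xs))"
    by (simp add: card_permutes_lessThan)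
  finally show ?thesis unfolding symP_eq_sum_permute_list len F_def by simp
qed

lemma compose_adag:
  assumes "mset_invariant g" and "length xs = p + length is"
  shows "compose (map adag is) g xs = complex_of_real (ladder_coeff p (length is)) *
     symP (\<lambda>ys. if take (length is) ys = is then g (drop (length is) ys) else 0) xs"
  using assms(2)
proof (induction "is" arbitrary: xs)
  case Nil
  thus ?case using symP_mset_invariant[OF assms(1)] by simp
next
  case (Cons i "is")
  let ?q = "length is"
  let ?D = "\<lambda>ys. if take ?q ys = is then g (drop ?q ys) else 0"
  have "compose (map adag (i # is)) g xs
      = complex_of_real (sqrt (real (length xs))) *
        symP (\<lambda>ys. if ys \<noteq> [] \<and> hd ys = i then compose (map adag is) g (tl ys) else 0) xs"
    using Cons.prems by (auto simp: adag_def)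
  also have "symP (\<lambda>ys. if ys \<noteq> [] \<and> hd ys = i then compose (map adag is) g (tl ys) else 0) xs
      = symP (\<lambda>ys. complex_of_real (ladder_coeff p ?q) *
          (if ys \<noteq> [] \<and> hd ys = i then symP ?D (tl ys) else 0)) xs"
  proof (rule symP_cong)
    fix ys assume "mset ys = mset xs"
    hence "length (tl ys) = p + ?q" using Cons.prems mset_eq_length by fastforce
    thus "(if ys \<noteq> [] \<and> hd ys = i then compose (map adag is) g (tl ys) else 0) =
        complex_of_real (ladder_coeff p ?q) * (if ys \<noteq> [] \<and> hd ys = i then symP ?D (tl ys) else 0)"
      using Cons.IH by simp
  qed
  also have "\<dots> = complex_of_real (ladder_coeff p ?q) *
      symP (\<lambda>ys. if ys \<noteq> [] \<and> hd ys = i then ?D (tl ys) else 0) xs"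
    by (simp add: symP_cmult symP_hd_symP)
  also have "symP (\<lambda>ys. if ys \<noteq> [] \<and> hd ys = i then ?D (tl ys) else 0) xs
      = symP (\<lambda>ys. if take (length (i # is)) ys = i # is then g (drop (length (i # is)) ys) else 0) xs"
  proof (rule symP_cong)
    fix ys :: "nat list"
    show "(if ys \<noteq> [] \<and> hd ys = i then ?D (tl ys) else 0)
        = (if take (length (i # is)) ys = i # is then g (drop (length (i # is)) ys) else 0)"
      by (cases ys) auto
  qed
  finally show ?case
    using ladder_coeff_Suc_top[of p ?q] Cons.prems
    by (simp add: mult.assoc[symmetric] of_real_mult[symmetric] del: of_real_mult)
qed

lemma compose_adag_ann:
  assumes "inH N k \<phi>" and "length xs = k" and "length I = k" and "length J = k"
  shows "compose (map adag I @ map ann (rev J)) \<phi> xs = of_nat (fact k) * \<phi> J * symP (delta I) xs"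
proof -
  define g where "g = compose (map ann (rev J)) \<phi>"
  have g: "g w = complex_of_real (ladder_coeff (length w) k) * \<phi> (J @ w)" for w
    unfolding g_def compose_ann using assms(4) by simp
  have g_Nil: "w \<noteq> [] \<Longrightarrow> g w = 0" for w
    using assms(1,4) unfolding g inH_def idx_def by auto
  have "mset_invariant g"
    unfolding mset_invariant_def by (metis g_Nil mset_eq_length length_0_conv)
  have "compose (map adag I @ map ann (rev J)) \<phi> xs
      = complex_of_real (ladder_coeff 0 k) * symP (\<lambda>ys. if take k ys = I then g (drop k ys) else 0) xs"
    using compose_adag[OF \<open>mset_invariant g\<close>, of xs 0 I, unfolded assms(3)] assms(2,3) by (simp add: compose_append g_def)
  also have "symP (\<lambda>ys. if take k ys = I then g (drop k ys) else 0) xs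
      = symP (\<lambda>ys. (complex_of_real (ladder_coeff 0 k) * \<phi> J) * delta I ys) xs"
  proof (rule symP_cong)
    fix ys assume "mset ys = mset xs"
    hence "length ys = k" using assms(2) mset_eq_length by metis
    thus "(if take k ys = I then g (drop k ys) else 0) = (complex_of_real (ladder_coeff 0 k) * \<phi> J) * delta I ys"
      using assms(3) by (auto simp: g delta_def)
  qed
  finally show ?thesis
    using ladder_coeff_squared[of 0 k] by (simp add: symP_cmult mult.assoc flip: of_real_mult)
qed

lemma compose_ann_adag:
  assumes "mset_invariant \<psi>" and "length zs = M" and "length I = k" and "length J = k"
  shows "compose (map ann I @ map adag (rev J)) \<psi> zs = complex_of_real (fact (M + k) / fact M) *
    symP (\<lambda>ys. if take k ys = rev J then \<psi> (drop k ys) else 0) (I @ zs)"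
proof -
  have "compose (map ann I @ map adag (rev J)) \<psi> zs
      = complex_of_real (ladder_coeff M k) * compose (map adag (rev J)) \<psi> (rev I @ zs)"
    using assms by (simp add: compose_append compose_ann)
  also have "\<dots> = complex_of_real (ladder_coeff M k * ladder_coeff M k) *
      symP (\<lambda>ys. if take k ys = rev J then \<psi> (drop k ys) else 0) (rev I @ zs)"
    using compose_adag[OF assms(1), of "rev I @ zs" M "rev J", unfolded length_rev assms(4)] assms
    by simp
  also have "symP (\<lambda>ys. if take k ys = rev J then \<psi> (drop k ys) else 0) (rev I @ zs)
      = symP (\<lambda>ys. if take k ys = rev J then \<psi> (drop k ys) else 0) (I @ zs)"
    by (rule symP_mset_eq) simp
  finally show ?thesis
    unfolding ladder_coeff_squared by (simp add: add.commute)
qed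

section \<open>The operator \<open>W\<^sub>k\<close> applied to a pure state\<close>

lemma inH_eq_sum_symP_delta:
  assumes "inH N M \<psi>"
  shows "(\<lambda>w. \<Sum>xs\<in>idx N M. \<psi> xs * symP (delta xs) w) = \<psi>"
proof
  fix w
  have "(\<lambda>ys. \<Sum>xs\<in>idx N M. \<psi> xs * delta xs ys) = \<psi>"
  proof
    fix ys
    have "(\<Sum>xs\<in>idx N M. \<psi> xs * delta xs ys) = (\<Sum>xs\<in>idx N M. if ys = xs then \<psi> ys else 0)"
      by (intro sum.cong refl) (auto simp: delta_def)
    also have "\<dots> = \<psi> ys" using assms unfolding inH_def by auto
    finally show "(\<Sum>xs\<in>idx N M. \<psi> xs * delta xs ys) = \<psi> ys" .
  qed
  hence "(\<Sum>xs\<in>idx N M. \<psi> xs * symP (delta xs) w) = symP \<psi> w"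
    using symP_sum[OF finite_idx[of N M], where c=\<psi> and f=delta and xs=w] by simp
  also have "\<dots> = \<psi> w" using symP_mset_invariant[OF inH_mset_invariant[OF assms]] .
  finally show "(\<Sum>xs\<in>idx N M. \<psi> xs * symP (delta xs) w) = \<psi> w" .
qed

lemma trH_proj_comp:
  assumes "inH N M \<psi>" and "sum_linear X"
  shows "trH N M (proj N M \<psi> \<circ> X) = inner N M \<psi> (X \<psi>)"
proof -
  have "X \<psi> = (\<lambda>w. \<Sum>xs\<in>idx N M. \<psi> xs * X (symP (delta xs)) w)"
    using sum_linearD[OF assms(2) finite_idx] inH_eq_sum_symP_delta[OF assms(1)] by metis
  hence "inner N M \<psi> (X \<psi>) = (\<Sum>zs\<in>idx N M. \<Sum>xs\<in>idx N M. cnj (\<psi> zs) * X (symP (delta xs)) zs * \<psi> xs)"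
    unfolding inner_def by (simp add: sum_distrib_left ac_simps)
  also have "\<dots> = trH N M (proj N M \<psi> \<circ> X)"
    unfolding trH_def proj_def inner_def by (subst sum.swap) (simp add: sum_distrib_right)
  finally show ?thesis by (rule sym)
qed

definition tensor :: "nat \<Rightarrow> (nat list \<Rightarrow> complex) \<Rightarrow> (nat list \<Rightarrow> complex) \<Rightarrow> nat list \<Rightarrow> complex" where
  "tensor k \<phi> \<psi> ys = \<phi> (take k ys) * \<psi> (drop k ys)"

lemma trH_proj_ladder:
  assumes "inH N M \<psi>" and "I \<in> idx N k" and "J \<in> idx N k"
  shows "trH N M (proj N M \<psi> \<circ> compose (map ann I @ map adag (rev J)))
    = complex_of_real (fact (M + k) / fact M) * (\<Sum>zs\<in>idx N M. cnj (\<psi> zs) *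
        symP (\<lambda>ys. if take k ys = rev J then \<psi> (drop k ys) else 0) (I @ zs))"
proof -
  have "trH N M (proj N M \<psi> \<circ> compose (map ann I @ map adag (rev J)))
      = inner N M \<psi> (compose (map ann I @ map adag (rev J)) \<psi>)"
    by (rule trH_proj_comp[OF assms(1) sum_linear_ladder])
  also have "\<dots> = (\<Sum>zs\<in>idx N M. cnj (\<psi> zs) * (complex_of_real (fact (M + k) / fact M) *
        symP (\<lambda>ys. if take k ys = rev J then \<psi> (drop k ys) else 0) (I @ zs)))"
    unfolding inner_def
    using compose_ann_adag[OF inH_mset_invariant[OF assms(1)] length_idx length_idx[OF assms(2)]
        length_idx[OF assms(3)]]
    by (intro sum.cong refl) simp
  finally show ?thesis by (simp add: sum_distrib_left ac_simps)
qed

lemma sum_idx_mult_symP_take: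
  assumes "inH N k \<phi>" and "w \<in> idx N (k + M)"
  shows "(\<Sum>J\<in>idx N k. \<phi> J * symP (\<lambda>ys. if take k ys = rev J then \<psi> (drop k ys) else 0) w)
       = symP (tensor k \<phi> \<psi>) w"
proof -
  have "(\<Sum>J\<in>idx N k. \<phi> J * symP (\<lambda>ys. if take k ys = rev J then \<psi> (drop k ys) else 0) w)
      = symP (\<lambda>ys. \<Sum>J\<in>idx N k. \<phi> J * (if take k ys = rev J then \<psi> (drop k ys) else 0)) w"
    by (rule symP_sum[OF finite_idx, symmetric])
  also have "\<dots> = symP (tensor k \<phi> \<psi>) w"
  proof (rule symP_cong)
    fix ys assume "mset ys = mset w"
    hence "ys \<in> idx N (k + M)" using idx_mset_eq assms(2) by blast
    hence J: "rev (take k ys) \<in> idx N k" unfolding idx_def by (auto dest: in_set_takeD)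
    have "(\<Sum>J\<in>idx N k. \<phi> J * (if take k ys = rev J then \<psi> (drop k ys) else 0))
        = (\<Sum>J\<in>idx N k. if rev (take k ys) = J then \<phi> J * \<psi> (drop k ys) else 0)"
      by (intro sum.cong refl) auto
    also have "\<dots> = \<phi> (rev (take k ys)) * \<psi> (drop k ys)"
      using J by simp
    also have "\<dots> = tensor k \<phi> \<psi> ys"
      using mset_invariantD[OF inH_mset_invariant[OF assms(1)], of "rev (take k ys)"]
      by (simp add: tensor_def)
    finally show "(\<Sum>J\<in>idx N k. \<phi> J * (if take k ys = rev J then \<psi> (drop k ys) else 0))
        = tensor k \<phi> \<psi> ys" .
  qed
  finally show ?thesis .
qed

lemma sum_idx_mult_symP_delta:
  assumes "xs \<in> idx N k" and "mset_invariant G"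
  shows "(\<Sum>I\<in>idx N k. G I * symP (delta I) xs) = G xs"
proof -
  define G' where "G' = (\<lambda>ys. if ys \<in> idx N k then G ys else 0)"
  have "mset_invariant G'"
    unfolding mset_invariant_def G'_def using idx_mset_eq mset_invariantD[OF assms(2)] by metis
  have "(\<lambda>ys. \<Sum>I\<in>idx N k. G I * delta I ys) = G'"
    by (auto simp: G'_def delta_def if_distrib cong: if_cong)
  hence "(\<Sum>I\<in>idx N k. G I * symP (delta I) xs) = symP G' xs"
    using symP_sum[OF finite_idx[of N k], where c=G and f=delta and xs=xs] by simp
  also have "\<dots> = G xs"
    using symP_mset_invariant[OF \<open>mset_invariant G'\<close>] assms(1) by (simp add: G'_def)
  finally show ?thesis .
qed

lemma W_proj:
  assumes \<psi>: "inH N M \<psi>" and \<phi>: "inH N k \<phi>" and xs: "xs \<in> idx N k"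
  shows "W N M k (proj N M \<psi>) \<phi> xs = complex_of_real (fact (M + k) / fact M) *
     (\<Sum>zs\<in>idx N M. cnj (\<psi> zs) * symP (tensor k \<phi> \<psi>) (xs @ zs))"
proof -
  define D where "D = complex_of_real (fact (M + k) / fact M)"
  define T where "T = (\<lambda>I J. trH N M (proj N M \<psi> \<circ> compose (map ann I @ map adag (rev J))))"
  define G where "G = (\<lambda>I. \<Sum>zs\<in>idx N M. cnj (\<psi> zs) * symP (tensor k \<phi> \<psi>) (I @ zs))"
  define S where "S = (\<lambda>J. symP (\<lambda>ys. if take k ys = rev J then \<psi> (drop k ys) else 0))"
  have sum_T: "(\<Sum>J\<in>idx N k. \<phi> J * T I J) = D * G I" if I: "I \<in> idx N k" for I
  proof -
    have "(\<Sum>J\<in>idx N k. \<phi> J * T I J)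
        = (\<Sum>J\<in>idx N k. \<Sum>zs\<in>idx N M. D * (cnj (\<psi> zs) * (\<phi> J * S J (I @ zs))))"
      by (intro sum.cong refl)
        (simp add: T_def D_def S_def trH_proj_ladder[OF \<psi> I] sum_distrib_left ac_simps)
    also have "\<dots> = D * (\<Sum>zs\<in>idx N M. cnj (\<psi> zs) * (\<Sum>J\<in>idx N k. \<phi> J * S J (I @ zs)))"
      by (subst sum.swap) (simp add: sum_distrib_left)
    also have "\<dots> = D * G I"
      unfolding G_def S_def
      using sum_idx_mult_symP_take[OF \<phi>] I by (auto simp: idx_def intro!: sum.cong)
    finally show ?thesis .
  qed
  have G: "mset_invariant G"
    unfolding mset_invariant_def G_def
    by (intro allI impI sum.cong refl arg_cong2[where f="(*)"] symP_mset_eq) simp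
  have "W N M k (proj N M \<psi>) \<phi> xs = (\<Sum>I\<in>idx N k. symP (delta I) xs * (\<Sum>J\<in>idx N k. \<phi> J * T I J))"
    unfolding W_def T_def
    using compose_adag_ann[OF \<phi> length_idx[OF xs] length_idx length_idx]
    by (simp add: sum_distrib_left sum_divide_distrib ac_simps)
  also have "\<dots> = D * (\<Sum>I\<in>idx N k. G I * symP (delta I) xs)"
    by (simp add: sum_T sum_distrib_left ac_simps)
  also have "\<dots> = D * G xs"
    by (simp only: sum_idx_mult_symP_delta[OF xs G])
  finally show ?thesis unfolding D_def G_def .
qed

section \<open>Symmetrizing a function of a split list\<close>

lemma nths_conv_map_nth: "nths xs I = map ((!) xs) (filter (\<lambda>i. i \<in> I) [0..<length xs])"
  unfolding nths_def
proof -
  have "zip xs [0..<length xs] = map (\<lambda>i. (xs ! i, i)) [0..<length xs]"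
    by (rule nth_equalityI) simp_all
  thus "map fst (filter (\<lambda>p. snd p \<in> I) (zip xs [0..<length xs]))
      = map ((!) xs) (filter (\<lambda>i. i \<in> I) [0..<length xs])"
    by (simp add: filter_map o_def)
qed

lemma mset_nths: "mset (nths xs I) = image_mset ((!) xs) (mset_set (I \<inter> {..<length xs}))"
proof -
  have "mset (filter (\<lambda>i. i \<in> I) [0..<length xs]) = mset_set (I \<inter> {..<length xs})"
    by (subst mset_set_set[symmetric]) (auto intro: arg_cong[where f=mset_set])
  thus ?thesis by (simp add: nths_conv_map_nth)
qed

lemma permutes_image_lessThan_card:
  assumes "\<sigma> permutes {..<n}" and "j \<le> n"
  shows "\<sigma> ` {..<j} \<subseteq> {..<n}" and "card (\<sigma> ` {..<j}) = j"
proof -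
  have "\<sigma> ` {..<j} \<subseteq> \<sigma> ` {..<n}" using assms(2) by (intro image_mono) auto
  thus "\<sigma> ` {..<j} \<subseteq> {..<n}" using permutes_image[OF assms(1)] by simp
  show "card (\<sigma> ` {..<j}) = j" using card_image[OF permutes_inj_on[OF assms(1)]] by simp
qed

lemma
  assumes "\<sigma> permutes {..<length w}" and "j \<le> length w"
  shows mset_take_permute_list: "mset (take j (permute_list \<sigma> w)) = mset (nths w (\<sigma> ` {..<j}))"
    and mset_drop_permute_list: "mset (drop j (permute_list \<sigma> w)) = mset (nths w (- \<sigma> ` {..<j}))"
proof -
  let ?n = "length w"
  have inj: "inj_on \<sigma> X" for X using permutes_inj_on[OF assms(1)] .
  have sub: "\<sigma> ` {..<j} \<subseteq> {..<?n}" using permutes_image_lessThan_card(1)[OF assms] .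
  have "mset (take j (permute_list \<sigma> w)) = image_mset ((!) w) (image_mset \<sigma> (mset_set {..<j}))"
    unfolding permute_list_def using assms(2)
    by (simp add: take_map multiset.map_comp o_def atLeast0LessThan[symmetric])
  also have "\<dots> = mset (nths w (\<sigma> ` {..<j}))"
    using sub by (simp add: mset_nths image_mset_mset_set[OF inj] Int_absorb2)
  finally show "mset (take j (permute_list \<sigma> w)) = mset (nths w (\<sigma> ` {..<j}))" .
  have "\<sigma> ` {j..<?n} = \<sigma> ` ({..<?n} - {..<j})"
    by (rule arg_cong[where f="image \<sigma>"]) auto
  also have "\<dots> = {..<?n} - \<sigma> ` {..<j}"
    by (simp only: image_set_diff[OF permutes_inj[OF assms(1)]] permutes_image[OF assms(1)])
  also have "\<dots> = - \<sigma> ` {..<j} \<inter> {..<?n}"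
    by blast
  finally have "\<sigma> ` {j..<?n} = - \<sigma> ` {..<j} \<inter> {..<?n}" .
  moreover have "mset (drop j (permute_list \<sigma> w)) = image_mset ((!) w) (image_mset \<sigma> (mset_set {j..<?n}))"
    unfolding permute_list_def using assms(2) by (simp add: drop_map multiset.map_comp o_def)
  ultimately show "mset (drop j (permute_list \<sigma> w)) = mset (nths w (- \<sigma> ` {..<j}))"
    by (simp add: mset_nths image_mset_mset_set[OF inj])
qed

lemma exists_permutes_image_eq:
  assumes "finite U" and "A \<subseteq> U" and "S \<subseteq> U" and "card A = card S"
  obtains \<rho> where "\<rho> permutes U" and "\<rho> ` A = S"
proof -
  have fA: "finite A" and fS: "finite S" using assms finite_subset by blast+
  obtain f where f: "bij_betw f A S" using finite_same_card_bij[OF fA fS assms(4)] by blast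
  have "card (U - A) = card (U - S)"
    using assms fA fS by (simp add: card_Diff_subset)
  then obtain g where g: "bij_betw g (U - A) (U - S)"
    using finite_same_card_bij[of "U - A" "U - S"] assms(1) by blast
  define \<rho> where "\<rho> = (\<lambda>x. if x \<in> A then f x else if x \<in> U then g x else x)"
  have "bij_betw \<rho> A S" using f by (rule bij_betw_cong[THEN iffD1, rotated]) (simp add: \<rho>_def)
  moreover have "bij_betw \<rho> (U - A) (U - S)"
    using g by (rule bij_betw_cong[THEN iffD1, rotated]) (simp add: \<rho>_def)
  ultimately have "bij_betw \<rho> (A \<union> (U - A)) (S \<union> (U - S))" by (rule bij_betw_combine) blast
  hence "bij_betw \<rho> U U" using assms(2,3) by (simp add: Un_absorb1)
  hence "\<rho> permutes U" by (rule bij_imp_permutes) (use assms(2) in \<open>auto simp: \<rho>_def\<close>)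
  moreover have "\<rho> ` A = S" using \<open>bij_betw \<rho> A S\<close> by (simp add: bij_betw_def)
  ultimately show ?thesis by (rule that)
qed

lemma permutes_comp_image:
  "\<rho> permutes U \<Longrightarrow> \<tau> permutes U \<Longrightarrow> \<tau> ` A = B \<Longrightarrow> \<rho> ` B = C
    \<Longrightarrow> \<rho> \<circ> \<tau> permutes U \<and> (\<rho> \<circ> \<tau>) ` A = C"
  using permutes_compose[of \<tau> U \<rho>] image_comp[of \<rho> \<tau> A] by simp

lemma card_permutes_image_eq:
  assumes "finite U" and "A \<subseteq> U" and "S \<subseteq> U" and "card A = card S"
  shows "card {\<sigma>. \<sigma> permutes U \<and> \<sigma> ` A = S} = card {\<sigma>. \<sigma> permutes U \<and> \<sigma> ` A = A}"
proof -
  obtain \<rho> where \<rho>: "\<rho> permutes U" "\<rho> ` A = S"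
    using exists_permutes_image_eq[OF assms] .
  have \<rho>_inv: "inv \<rho> permutes U" "inv \<rho> ` S = A"
    using permutes_inv[OF \<rho>(1)] unfolding \<rho>(2)[symmetric] image_comp permutes_inv_o(2)[OF \<rho>(1)]
    by simp_all
  have "bij_betw ((\<circ>) \<rho>) {\<sigma>. \<sigma> permutes U \<and> \<sigma> ` A = A} {\<sigma>. \<sigma> permutes U \<and> \<sigma> ` A = S}"
  proof (rule bij_betw_byWitness[where f'="(\<circ>) (inv \<rho>)"])
    show "(\<circ>) \<rho> ` {\<sigma>. \<sigma> permutes U \<and> \<sigma> ` A = A} \<subseteq> {\<sigma>. \<sigma> permutes U \<and> \<sigma> ` A = S}"
      using permutes_comp_image[OF \<rho>(1) _ _ \<rho>(2)] by blast
    show "(\<circ>) (inv \<rho>) ` {\<sigma>. \<sigma> permutes U \<and> \<sigma> ` A = S} \<subseteq> {\<sigma>. \<sigma> permutes U \<and> \<sigma> ` A = A}"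
      using permutes_comp_image[OF \<rho>_inv(1) _ _ \<rho>_inv(2)] by blast
  qed (simp_all add: o_assoc permutes_inv_o[OF \<rho>(1)])
  thus ?thesis by (rule bij_betw_same_card[symmetric])
qed

lemma card_permutes_image_lessThan:
  assumes "S \<subseteq> {..<n}" and "card S = j"
  shows "card {\<sigma>. \<sigma> permutes {..<n} \<and> \<sigma> ` {..<j} = S} = fact j * fact (n - j)"
proof -
  define c where "c = card {\<sigma>. \<sigma> permutes {..<n} \<and> \<sigma> ` {..<j} = {..<j}}"
  define T where "T = {S. S \<subseteq> {..<n} \<and> card S = j}"
  have "j \<le> n" using card_mono[OF _ assms(1)] assms(2) by simp
  have fiber: "card {\<sigma>. \<sigma> permutes {..<n} \<and> \<sigma> ` {..<j} = S'} = c" if "S' \<in> T" for S'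
    using card_permutes_image_eq[of "{..<n}" "{..<j}" S'] that \<open>j \<le> n\<close> by (simp add: T_def c_def)
  have "finite T" unfolding T_def by (rule finite_subset[of _ "Pow {..<n}"]) auto
  have "(\<lambda>\<sigma>. \<sigma> ` {..<j}) ` {\<sigma>. \<sigma> permutes {..<n}} \<subseteq> T"
    unfolding T_def using permutes_image_lessThan_card[OF _ \<open>j \<le> n\<close>] by blast
  from sum.group[OF finite_permutes_lessThan \<open>finite T\<close> this, of "\<lambda>_. 1::nat"]
  have "fact n = (\<Sum>S'\<in>T. card {\<sigma>. \<sigma> permutes {..<n} \<and> \<sigma> ` {..<j} = S'})"
    by (simp add: card_permutes_lessThan)
  also have "\<dots> = (n choose j) * c"
    using fiber n_subsets[of "{..<n}" j] by (simp add: T_def)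
  finally have "(n choose j) * c = (n choose j) * (fact j * fact (n - j))"
    using binomial_fact_lemma[OF \<open>j \<le> n\<close>] by (metis mult.commute)
  hence "c = fact j * fact (n - j)"
    using \<open>j \<le> n\<close> by simp
  thus ?thesis using fiber assms by (simp add: T_def)
qed

lemma sum_permutes_split:
  fixes F :: "'a list \<Rightarrow> 'a list \<Rightarrow> 'b :: comm_semiring_1"
  assumes "j \<le> length w"
    and F: "\<And>a a' c c'. mset a = mset a' \<Longrightarrow> mset c = mset c' \<Longrightarrow> F a c = F a' c'"
  shows "(\<Sum>\<sigma>\<in>{\<sigma>. \<sigma> permutes {..<length w}}. F (take j (permute_list \<sigma> w)) (drop j (permute_list \<sigma> w)))
    = of_nat (fact j * fact (length w - j)) *
      (\<Sum>S\<in>{S. S \<subseteq> {..<length w} \<and> card S = j}. F (nths w S) (nths w (- S)))"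
proof -
  let ?P = "{\<sigma>. \<sigma> permutes {..<length w}}"
  let ?T = "{S. S \<subseteq> {..<length w} \<and> card S = j}"
  let ?G = "\<lambda>S. F (nths w S) (nths w (- S))"
  have "finite ?T" by (rule finite_subset[of _ "Pow {..<length w}"]) auto
  have img: "(\<lambda>\<sigma>. \<sigma> ` {..<j}) ` ?P \<subseteq> ?T"
    using permutes_image_lessThan_card[OF _ assms(1)] by blast
  have "(\<Sum>\<sigma>\<in>?P. F (take j (permute_list \<sigma> w)) (drop j (permute_list \<sigma> w))) = (\<Sum>\<sigma>\<in>?P. ?G (\<sigma> ` {..<j}))"
  proof (rule sum.cong[OF refl])
    fix \<sigma> assume "\<sigma> \<in> ?P"
    hence \<sigma>: "\<sigma> permutes {..<length w}" by simp
    show "F (take j (permute_list \<sigma> w)) (drop j (permute_list \<sigma> w)) = ?G (\<sigma> ` {..<j})"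
      by (rule F[OF mset_take_permute_list[OF \<sigma> assms(1)] mset_drop_permute_list[OF \<sigma> assms(1)]])
  qed
  also have "\<dots> = (\<Sum>S\<in>?T. \<Sum>\<sigma>\<in>{\<sigma> \<in> ?P. \<sigma> ` {..<j} = S}. ?G (\<sigma> ` {..<j}))"
    by (rule sum.group[OF finite_permutes_lessThan \<open>finite ?T\<close> img, symmetric])
  also have "\<dots> = (\<Sum>S\<in>?T. of_nat (fact j * fact (length w - j)) * ?G S)"
    using card_permutes_image_lessThan by (intro sum.cong refl) simp
  finally show ?thesis by (simp add: sum_distrib_left)
qed

lemma symP_split:
  fixes F :: "nat list \<Rightarrow> nat list \<Rightarrow> complex"
  assumes "j \<le> length w"
    and F: "\<And>a a' c c'. mset a = mset a' \<Longrightarrow> mset c = mset c' \<Longrightarrow> F a c = F a' c'"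
  shows "of_nat (length w choose j) * symP (\<lambda>ys. F (take j ys) (drop j ys)) w
    = (\<Sum>S\<in>{S. S \<subseteq> {..<length w} \<and> card S = j}. F (nths w S) (nths w (- S)))"
proof -
  have "symP (\<lambda>ys. F (take j ys) (drop j ys)) w
      = of_nat (fact j * fact (length w - j)) *
        (\<Sum>S\<in>{S. S \<subseteq> {..<length w} \<and> card S = j}. F (nths w S) (nths w (- S))) / fact (length w)"
    using sum_permutes_split[OF assms] by (simp add: symP_eq_sum_permute_list)
  also have "fact (length w) = (of_nat (fact j * fact (length w - j)) * of_nat (length w choose j) :: complex)"
    using binomial_fact_lemma[OF assms(1)] by (metis of_nat_fact of_nat_mult)
  finally show ?thesis using assms(1) by simp
qed

lemma card_Un_image_add:
  fixes k :: nat
  assumes "A \<subseteq> {..<k}" and "finite B"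
  shows "card (A \<union> (+) k ` B) = card A + card B"
proof -
  have "finite A" using assms(1) by (rule finite_subset) simp
  moreover have "A \<inter> (+) k ` B = {}" using assms(1) by auto
  ultimately have "card (A \<union> (+) k ` B) = card A + card ((+) k ` B)"
    using assms(2) by (simp add: card_Un_disjoint)
  thus ?thesis by (simp add: card_image)
qed

lemma Int_lessThan_Un_image_add:
  fixes k :: nat
  shows "S \<inter> {..<k} \<union> (+) k ` {i. k + i \<in> S} = S"
proof (intro equalityI subsetI)
  fix x assume x: "x \<in> S"
  show "x \<in> S \<inter> {..<k} \<union> (+) k ` {i. k + i \<in> S}"
  proof (cases "x < k")
    case False
    hence "x = k + (x - k)" by simp
    with x have "x \<in> (+) k ` {i. k + i \<in> S}" by (metis (mono_tags) image_eqI mem_Collect_eq)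
    thus ?thesis by simp
  qed (use x in simp)
qed auto

lemma sum_subsets_split:
  fixes k M :: nat
  shows "(\<Sum>S\<in>{S. S \<subseteq> {..<k + M} \<and> card S = k}. g S)
    = (\<Sum>A\<in>Pow {..<k}. \<Sum>B\<in>{B. B \<subseteq> {..<M} \<and> card B = k - card A}. g (A \<union> (+) k ` B))"
proof -
  define Sig where "Sig = Sigma (Pow {..<k}) (\<lambda>A. {B. B \<subseteq> {..<M} \<and> card B = k - card A})"
  define T where "T = {S. S \<subseteq> {..<k + M} \<and> card S = k}"
  have left_inv: "(A \<union> (+) k ` B) \<inter> {..<k} = A" "{i. k + i \<in> A \<union> (+) k ` B} = B"
    if "A \<subseteq> {..<k}" for A B
    using that by auto
  have to_T: "A \<union> (+) k ` B \<in> T" if "(A, B) \<in> Sig" for A B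
  proof -
    have "A \<subseteq> {..<k}" "B \<subseteq> {..<M}" "card B = k - card A" using that by (auto simp: Sig_def)
    moreover have "card A \<le> k" using card_mono[OF _ \<open>A \<subseteq> {..<k}\<close>] by simp
    ultimately show ?thesis
      using card_Un_image_add[of A k B] finite_subset[of B "{..<M}"] by (auto simp: T_def)
  qed
  have to_Sig: "(S \<inter> {..<k}, {i. k + i \<in> S}) \<in> Sig" if "S \<in> T" for S
  proof -
    have S: "S \<subseteq> {..<k + M}" "card S = k" using that by (auto simp: T_def)
    have B: "{i. k + i \<in> S} \<subseteq> {..<M}" using S(1) by auto
    have "card S = card (S \<inter> {..<k}) + card {i. k + i \<in> S}"
      using card_Un_image_add[of "S \<inter> {..<k}" k "{i. k + i \<in> S}"] finite_subset[OF B]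
      by (simp add: Int_lessThan_Un_image_add)
    thus ?thesis using S B by (simp add: Sig_def)
  qed
  have "bij_betw (\<lambda>(A, B). A \<union> (+) k ` B) Sig T"
  proof (rule bij_betw_byWitness[where f'="\<lambda>S. (S \<inter> {..<k}, {i. k + i \<in> S})"])
    show "\<forall>S\<in>T. (case (S \<inter> {..<k}, {i. k + i \<in> S}) of (A, B) \<Rightarrow> A \<union> (+) k ` B) = S"
      by (simp add: Int_lessThan_Un_image_add)
    show "(\<lambda>S. (S \<inter> {..<k}, {i. k + i \<in> S})) ` T \<subseteq> Sig"
      using to_Sig by blast
    show "(\<lambda>(A, B). A \<union> (+) k ` B) ` Sig \<subseteq> T"
      using to_T by auto
  qed (use left_inv in \<open>auto simp: Sig_def\<close>)
  hence "(\<Sum>S\<in>T. g S) = (\<Sum>(A, B)\<in>Sig. g (A \<union> (+) k ` B))"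
    by (simp add: sum.reindex_bij_betw[symmetric] case_prod_unfold)
  also have "\<dots> = (\<Sum>A\<in>Pow {..<k}. \<Sum>B\<in>{B. B \<subseteq> {..<M} \<and> card B = k - card A}. g (A \<union> (+) k ` B))"
    unfolding Sig_def by (rule sum.Sigma[symmetric]) (auto intro: finite_subset[of _ "Pow {..<M}"])
  finally show ?thesis unfolding T_def .
qed

lemma nths_cong_lessThan:
  "S \<inter> {..<length xs} = S' \<inter> {..<length xs} \<Longrightarrow> nths xs S = nths xs S'"
  unfolding nths_conv_map_nth by (metis (no_types, lifting) Int_iff atLeastLessThan_iff filter_cong
      lessThan_iff set_upt)

lemma nths_append_image_add:
  assumes "length xs = k" and "A \<subseteq> {..<k}"
  shows "nths (xs @ zs) (A \<union> (+) k ` B) = nths xs A @ nths zs B"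
    and "nths (xs @ zs) (- (A \<union> (+) k ` B)) = nths xs (- A) @ nths zs (- B)"
proof -
  have "{j. j + k \<in> A \<union> (+) k ` B} = B" "{j. j + k \<in> - (A \<union> (+) k ` B)} = - B"
    using assms(2) by (auto simp: add.commute)
  moreover have "nths xs (A \<union> (+) k ` B) = nths xs A" "nths xs (- (A \<union> (+) k ` B)) = nths xs (- A)"
    using assms by (auto intro!: nths_cong_lessThan)
  ultimately show "nths (xs @ zs) (A \<union> (+) k ` B) = nths xs A @ nths zs B"
    and "nths (xs @ zs) (- (A \<union> (+) k ` B)) = nths xs (- A) @ nths zs (- B)"
    using assms(1) by (simp_all add: nths_append)
qed

lemma sum_idx_add:
  "(\<Sum>z\<in>idx N (m + r). f z) = (\<Sum>u\<in>idx N m. \<Sum>v\<in>idx N r. f (u @ v))"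
proof -
  have "bij_betw (\<lambda>(u, v). u @ v) (idx N m \<times> idx N r) (idx N (m + r))"
    by (rule bij_betw_byWitness[where f'="\<lambda>z. (take m z, drop m z)"])
      (auto simp: idx_def dest: in_set_takeD in_set_dropD)
  thus ?thesis
    by (simp add: sum.reindex_bij_betw[symmetric] sum.cartesian_product case_prod_unfold)
qed

lemma bij_betw_permute_list_idx:
  assumes "\<rho> permutes {..<n}"
  shows "bij_betw (permute_list \<rho>) (idx N n) (idx N n)"
proof -
  have "permute_list (inv \<rho>) (permute_list \<rho> xs) = xs" if "xs \<in> idx N n" for xs
    using permute_list_compose[of "inv \<rho>" xs \<rho>] permutes_inv[OF assms] permutes_inv_o(1)[OF assms]
      length_idx[OF that] by simp
  hence "inj_on (permute_list \<rho>) (idx N n)" by (rule inj_on_inverseI)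
  moreover have "permute_list \<rho> ` idx N n \<subseteq> idx N n" using assms by (auto simp: idx_def)
  ultimately show ?thesis using endo_inj_surj[OF finite_idx] by (simp add: bij_betw_def)
qed

text \<open>Up to the factor \<open>M!/(M - m)!\<close>, the value at \<open>a @ c\<close> of \<open>(I\<^sup>\<otimes>\<^sup>|\<^sup>a\<^sup>| \<otimes> \<gamma>\<^sup>(\<^sup>m\<^sup>)\<^sub>\<psi>) \<phi>\<close>;
  see \<open>tensorI_rdm\<close>.\<close>
definition contraction :: "nat \<Rightarrow> nat \<Rightarrow> (nat list \<Rightarrow> complex) \<Rightarrow> (nat list \<Rightarrow> complex)
    \<Rightarrow> nat \<Rightarrow> nat list \<Rightarrow> nat list \<Rightarrow> complex" where
  "contraction N M \<psi> \<phi> m a c =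
    (\<Sum>u\<in>idx N m. \<Sum>v\<in>idx N (M - m). cnj (\<psi> (u @ v)) * \<phi> (a @ u) * \<psi> (c @ v))"

lemma contraction_mset_eq:
  assumes "mset_invariant \<psi>" and "mset_invariant \<phi>" and "mset a = mset a'" and "mset c = mset c'"
  shows "contraction N M \<psi> \<phi> m a c = contraction N M \<psi> \<phi> m a' c'"
  unfolding contraction_def
  using mset_invariant_append_right[OF assms(2,3)] mset_invariant_append_right[OF assms(1,4)] by simp

lemma sum_idx_nths_eq_contraction:
  assumes \<psi>: "mset_invariant \<psi>" and \<phi>: "mset_invariant \<phi>" and B: "B \<subseteq> {..<M}" "card B = m"
  shows "(\<Sum>zs\<in>idx N M. cnj (\<psi> zs) * \<phi> (a @ nths zs B) * \<psi> (c @ nths zs (- B)))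
    = contraction N M \<psi> \<phi> m a c"
proof -
  have "m \<le> M" using card_mono[OF _ B(1)] B(2) by simp
  obtain \<rho> where \<rho>: "\<rho> permutes {..<M}" "\<rho> ` {..<m} = B"
    using exists_permutes_image_eq[of "{..<M}" "{..<m}" B] B \<open>m \<le> M\<close> by auto
  define f where "f = (\<lambda>z. cnj (\<psi> z) * \<phi> (a @ take m z) * \<psi> (c @ drop m z))"
  have "cnj (\<psi> zs) * \<phi> (a @ nths zs B) * \<psi> (c @ nths zs (- B)) = f (permute_list \<rho> zs)"
    if "zs \<in> idx N M" for zs
  proof -
    have \<rho>': "\<rho> permutes {..<length zs}" and m: "m \<le> length zs"
      using \<rho>(1) \<open>m \<le> M\<close> length_idx[OF that] by simp_all
    show ?thesis
      unfolding f_def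
      using mset_invariantD[OF \<psi>, of "permute_list \<rho> zs" zs] \<rho>'
        mset_invariant_append_left[OF \<phi> mset_take_permute_list[OF \<rho>' m]]
        mset_invariant_append_left[OF \<psi> mset_drop_permute_list[OF \<rho>' m]]
      by (simp add: \<rho>(2))
  qed
  hence "(\<Sum>zs\<in>idx N M. cnj (\<psi> zs) * \<phi> (a @ nths zs B) * \<psi> (c @ nths zs (- B)))
      = (\<Sum>zs\<in>idx N M. f (permute_list \<rho> zs))"
    by (rule sum.cong[OF refl])
  also have "\<dots> = (\<Sum>z\<in>idx N (m + (M - m)). f z)"
    using sum.reindex_bij_betw[OF bij_betw_permute_list_idx[OF \<rho>(1)]] \<open>m \<le> M\<close> by simp
  also have "\<dots> = contraction N M \<psi> \<phi> m a c"
    unfolding sum_idx_add contraction_def f_def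
    by (intro sum.cong refl) (simp add: length_idx)
  finally show ?thesis .
qed

section \<open>Both sides as sums of contractions\<close>

text \<open>A \<open>k\<close>-subset of the positions of \<open>xs @ zs\<close> is \<open>A \<union> (+) k ` B\<close> with \<open>A \<subseteq> {..<k}\<close>;
  by the symmetry of \<open>\<psi>\<close> the sum over \<open>zs\<close> depends on \<open>B\<close> only through its size.\<close>
lemma sum_idx_symP_tensor:
  assumes \<psi>: "inH N M \<psi>" and \<phi>: "inH N k \<phi>" and xs: "xs \<in> idx N k"
  shows "of_nat (k + M choose k) * (\<Sum>zs\<in>idx N M. cnj (\<psi> zs) * symP (tensor k \<phi> \<psi>) (xs @ zs))
    = (\<Sum>A\<in>Pow {..<k}. of_nat (M choose (k - card A)) *
        contraction N M \<psi> \<phi> (k - card A) (nths xs A) (nths xs (- A)))"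
proof -
  have sym\<psi>: "mset_invariant \<psi>" and sym\<phi>: "mset_invariant \<phi>"
    using \<psi> \<phi> by (simp_all add: inH_mset_invariant)
  have lx: "length xs = k" using length_idx[OF xs] .
  define g where "g = (\<lambda>S. \<Sum>zs\<in>idx N M. cnj (\<psi> zs) * \<phi> (nths (xs @ zs) S) * \<psi> (nths (xs @ zs) (- S)))"
  have split: "\<phi> a * \<psi> c = \<phi> a' * \<psi> c'" if "mset a = mset a'" "mset c = mset c'" for a a' c c'
    using mset_invariantD[OF sym\<phi> that(1)] mset_invariantD[OF sym\<psi> that(2)] by simp
  have "of_nat (k + M choose k) * symP (tensor k \<phi> \<psi>) (xs @ zs)
      = (\<Sum>S\<in>{S. S \<subseteq> {..<k + M} \<and> card S = k}. \<phi> (nths (xs @ zs) S) * \<psi> (nths (xs @ zs) (- S)))"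
    if "zs \<in> idx N M" for zs
  proof -
    have len: "length (xs @ zs) = k + M" using lx length_idx[OF that] by simp
    have "tensor k \<phi> \<psi> = (\<lambda>ys. \<phi> (take k ys) * \<psi> (drop k ys))"
      by (simp add: tensor_def fun_eq_iff)
    moreover have "of_nat (length (xs @ zs) choose k) * symP (\<lambda>ys. \<phi> (take k ys) * \<psi> (drop k ys)) (xs @ zs)
        = (\<Sum>S\<in>{S. S \<subseteq> {..<length (xs @ zs)} \<and> card S = k}.
            \<phi> (nths (xs @ zs) S) * \<psi> (nths (xs @ zs) (- S)))"
      by (rule symP_split[of k "xs @ zs" "\<lambda>a c. \<phi> a * \<psi> c", OF _ split]) (use len in simp)
    ultimately show ?thesis unfolding len by (simp only:)
  qed
  hence "of_nat (k + M choose k) * (\<Sum>zs\<in>idx N M. cnj (\<psi> zs) * symP (tensor k \<phi> \<psi>) (xs @ zs))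
      = (\<Sum>S\<in>{S. S \<subseteq> {..<k + M} \<and> card S = k}. g S)"
    unfolding g_def by (subst sum.swap) (simp add: sum_distrib_left sum_distrib_right mult_ac)
  also have "\<dots> = (\<Sum>A\<in>Pow {..<k}. \<Sum>B\<in>{B. B \<subseteq> {..<M} \<and> card B = k - card A}.
      contraction N M \<psi> \<phi> (k - card A) (nths xs A) (nths xs (- A)))"
    unfolding sum_subsets_split g_def
    using sum_idx_nths_eq_contraction[OF sym\<psi> sym\<phi>] nths_append_image_add[OF lx]
    by (intro sum.cong refl) (simp add: mult.assoc)
  also have "\<dots> = (\<Sum>A\<in>Pow {..<k}. of_nat (M choose (k - card A)) *
      contraction N M \<psi> \<phi> (k - card A) (nths xs A) (nths xs (- A)))"
    by (intro sum.cong refl) (simp add: n_subsets)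
  finally show ?thesis .
qed

lemma W_proj_eq_sum_contraction:
  assumes "inH N M \<psi>" and "inH N k \<phi>" and "xs \<in> idx N k"
  shows "W N M k (proj N M \<psi>) \<phi> xs = of_nat (fact k) * (\<Sum>A\<in>Pow {..<k}. of_nat (M choose (k - card A)) *
      contraction N M \<psi> \<phi> (k - card A) (nths xs A) (nths xs (- A)))"
proof -
  have "(fact k * fact M * of_nat (k + M choose k) :: real) = fact (k + M)"
    using binomial_fact_lemma[of k "k + M"] by (metis add_diff_cancel_left' le_add1 of_nat_fact of_nat_mult)
  hence "fact (M + k) / fact M = (fact k * of_nat (k + M choose k) :: real)"
    by (simp add: add.commute field_simps)
  hence "complex_of_real (fact (M + k) / fact M) = of_nat (fact k) * of_nat (k + M choose k)"
    by simp
  thus ?thesis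
    using W_proj[OF assms] sum_idx_symP_tensor[OF assms] by (simp add: mult.assoc)
qed

lemma fact_div_fact_eq_choose:
  "(if j \<le> M then of_nat (fact M) / of_nat (fact (M - j)) else 0 :: complex) = of_nat (fact j * (M choose j))"
proof (cases "j \<le> M")
  case True
  hence "fact j * (M choose j) * fact (M - j) = fact M"
    using binomial_fact_lemma[OF True] by (simp add: ac_simps)
  hence "(of_nat (fact j * (M choose j)) * of_nat (fact (M - j)) :: complex) = of_nat (fact M)"
    by (metis of_nat_mult)
  thus ?thesis using True by (simp add: divide_eq_eq)
qed simp

lemma rdm_eq:
  "rdm N M \<psi> j g xs = of_nat (fact j * (M choose j)) *
    (\<Sum>ys\<in>idx N j. (\<Sum>zs\<in>idx N (M - j). \<psi> (xs @ zs) * cnj (\<psi> (ys @ zs))) * g ys)"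
  unfolding rdm_def fact_div_fact_eq_choose[symmetric] by simp

lemma tensorI_rdm:
  "tensorI l (rdm N M \<psi> j) \<phi> ys
    = of_nat (fact j * (M choose j)) * contraction N M \<psi> \<phi> j (take l ys) (drop l ys)"
  unfolding tensorI_def rdm_eq contraction_def sum_distrib_right by (simp add: ac_simps)

lemma Tpow_rdm:
  assumes "l \<le> k" and \<psi>: "inH N M \<psi>" and \<phi>: "inH N k \<phi>" and xs: "xs \<in> idx N k"
  shows "of_nat (k choose l) * Tpow k l (rdm N M \<psi> (k - l)) \<phi> xs = of_nat (fact k * (M choose (k - l))) *
      (\<Sum>A\<in>{A. A \<subseteq> {..<k} \<and> card A = l}. contraction N M \<psi> \<phi> (k - l) (nths xs A) (nths xs (- A)))"
proof -
  define c :: complex where "c = of_nat (fact (k - l) * (M choose (k - l)))"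
  have lx: "length xs = k" using length_idx[OF xs] .
  have split: "c * contraction N M \<psi> \<phi> (k - l) a b = c * contraction N M \<psi> \<phi> (k - l) a' b'"
    if "mset a = mset a'" "mset b = mset b'" for a a' b b'
    using contraction_mset_eq[OF inH_mset_invariant[OF \<psi>] inH_mset_invariant[OF \<phi>] that] by simp
  have tensor_eq: "tensorI l (rdm N M \<psi> (k - l)) (symP \<phi>)
      = (\<lambda>ys. c * contraction N M \<psi> \<phi> (k - l) (take l ys) (drop l ys))"
  proof -
    have "symP \<phi> = \<phi>" using symP_mset_invariant[OF inH_mset_invariant[OF \<phi>]] by (rule ext)
    thus ?thesis unfolding \<open>symP \<phi> = \<phi>\<close> by (simp add: fun_eq_iff tensorI_rdm c_def)
  qed
  have split_sum: "of_nat (k choose l) * symP (\<lambda>ys. c * contraction N M \<psi> \<phi> (k - l) (take l ys) (drop l ys)) xs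
      = (\<Sum>A\<in>{A. A \<subseteq> {..<k} \<and> card A = l}. c * contraction N M \<psi> \<phi> (k - l) (nths xs A) (nths xs (- A)))"
    by (rule symP_split[of l xs "\<lambda>a b. c * contraction N M \<psi> \<phi> (k - l) a b", OF _ split, unfolded lx])
      (rule assms(1))
  have "of_nat (k choose l) * Tpow k l (rdm N M \<psi> (k - l)) \<phi> xs = of_nat (fact k) / of_nat (fact (k - l)) *
      (of_nat (k choose l) * symP (\<lambda>ys. c * contraction N M \<psi> \<phi> (k - l) (take l ys) (drop l ys)) xs)"
    unfolding Tpow_def tensor_eq by (simp only: ac_simps)
  also have "\<dots> = of_nat (fact k) / of_nat (fact (k - l)) *
      (\<Sum>A\<in>{A. A \<subseteq> {..<k} \<and> card A = l}. c * contraction N M \<psi> \<phi> (k - l) (nths xs A) (nths xs (- A)))"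
    by (simp only: split_sum)
  also have "\<dots> = (of_nat (fact k) / of_nat (fact (k - l)) * c) *
      (\<Sum>A\<in>{A. A \<subseteq> {..<k} \<and> card A = l}. contraction N M \<psi> \<phi> (k - l) (nths xs A) (nths xs (- A)))"
    by (simp only: sum_distrib_left mult.assoc)
  also have "of_nat (fact k) / of_nat (fact (k - l)) * c = of_nat (fact k * (M choose (k - l)))"
    by (simp add: c_def)
  finally show ?thesis .
qed

lemma sum_Pow_by_card:
  assumes "finite X"
  shows "(\<Sum>A\<in>Pow X. f A) = (\<Sum>l\<le>card X. \<Sum>A\<in>{A. A \<subseteq> X \<and> card A = l}. f A)"
proof -
  have "card ` Pow X \<subseteq> {..card X}" using assms by (auto intro: card_mono)
  thus ?thesis using sum.group[of "Pow X" "{..card X}" card f] assms by simp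
qed

lemma W_proj_eq_sum_Tpow:
  assumes \<psi>: "inH N M \<psi>" and \<phi>: "inH N k \<phi>" and xs: "xs \<in> idx N k"
  shows "W N M k (proj N M \<psi>) \<phi> xs = (\<Sum>l\<le>k. of_nat (k choose l) * Tpow k l (rdm N M \<psi> (k - l)) \<phi> xs)"
proof -
  define f where "f = (\<lambda>A. of_nat (fact k) * of_nat (M choose (k - card A)) *
      contraction N M \<psi> \<phi> (k - card A) (nths xs A) (nths xs (- A)))"
  have "W N M k (proj N M \<psi>) \<phi> xs = (\<Sum>A\<in>Pow {..<k}. f A)"
    unfolding W_proj_eq_sum_contraction[OF assms] f_def by (simp add: sum_distrib_left mult.assoc)
  also have "\<dots> = (\<Sum>l\<le>k. \<Sum>A\<in>{A. A \<subseteq> {..<k} \<and> card A = l}. f A)"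
    using sum_Pow_by_card[of "{..<k}" f] by simp
  also have "\<dots> = (\<Sum>l\<le>k. of_nat (k choose l) * Tpow k l (rdm N M \<psi> (k - l)) \<phi> xs)"
  proof (rule sum.cong[OF refl])
    fix l assume "l \<in> {..k}"
    hence "(\<Sum>A\<in>{A. A \<subseteq> {..<k} \<and> card A = l}. f A) = of_nat (fact k * (M choose (k - l))) *
        (\<Sum>A\<in>{A. A \<subseteq> {..<k} \<and> card A = l}. contraction N M \<psi> \<phi> (k - l) (nths xs A) (nths xs (- A)))"
      unfolding f_def by (simp add: sum_distrib_left)
    also have "\<dots> = of_nat (k choose l) * Tpow k l (rdm N M \<psi> (k - l)) \<phi> xs"
      using Tpow_rdm[OF _ assms] \<open>l \<in> {..k}\<close> by simp
    finally show "(\<Sum>A\<in>{A. A \<subseteq> {..<k} \<and> card A = l}. f A)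
        = of_nat (k choose l) * Tpow k l (rdm N M \<psi> (k - l)) \<phi> xs" .
  qed
  finally show ?thesis .
qed

theorem mainTheorem5:
  fixes N M k :: nat
  assumes "N \<ge> 2" and "M \<ge> 1"
  shows "\<exists>C :: nat \<Rightarrow> real. (\<forall>l\<le>k. C l > 0) \<and>
    (\<forall>\<psi>. unitH N M \<psi> \<longrightarrow>
      (\<forall>\<phi>. inH N k \<phi> \<longrightarrow>
        (\<forall>xs\<in>idx N k.
          W N M k (proj N M \<psi>) \<phi> xs =
          (\<Sum>l\<le>k. complex_of_real (C l) * Tpow k l (rdm N M \<psi> (k - l)) \<phi> xs))))"
proof (intro exI[of _ "\<lambda>l. real (k choose l)"] conjI allI impI ballI)
  show "real (k choose l) > 0" if "l \<le> k" for l
    using that by simp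
  show "W N M k (proj N M \<psi>) \<phi> xs =
      (\<Sum>l\<le>k. complex_of_real (real (k choose l)) * Tpow k l (rdm N M \<psi> (k - l)) \<phi> xs)"
    if "unitH N M \<psi>" and "inH N k \<phi>" and "xs \<in> idx N k" for \<psi> \<phi> xs
    using W_proj_eq_sum_Tpow that unfolding unitH_def by simp
qed

end
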